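(* Let $n\ge3$, $\mathfrak{g}=o(2n)$ in split form, and let $r_{BD}$ be the Belavin–Drinfeld $r$-matrix associated to the admissible triple $\Gamma_1=\{\alpha_{n-1}\}$, $\Gamma_2=\{\alpha_n\}$, $\tau(\alpha_{n-1})=\alpha_n$ (with some admissible $r_0$). Then $C(r_{BD})$ consists exactly of the diagonal matrices $T=\mathrm{diag}(t_1,\dots,t_{n-1},\eta,\eta,t_{n-1}^{-1},\dots,t_1^{-1})$ with $t_1,\dots,t_{n-1}\in\overline{\mathbb{K}}^\times$ arbitrary and $\eta\in\{1,-1\}$.
   Context: $\mathbb{K}=\mathbb{C}((\hbar))$, $\overline{\mathbb{K}}$ its algebraic closure. $S$ is the $2n\times2n$ antidiagonal matrix of ones; $o(2n)=\{A:A^TS+SA=0\}$, $O(2n)=\{X:X^TSX=S\}$ acting by conjugation. The Cartan subalgebra consists of $\mathrm{diag}(a_1,\dots,a_n,-a_n,\dots,-a_1)$; $\epsilon_i$ is the functional giving $a_i$; simple roots $\alpha_i=\epsilon_i-\epsilon_{i+1}$ ($i<n$), $\alpha_n=\epsilon_{n-1}+\epsilon_n$; positive roots correspond to the upper triangular part. $e_{\pm\alpha}$ are root vectors normalized by the invariant form, $\Omega$ the Casimir element, $\Omega_0$ its Cartan part. The $r$-matrix is $r_{BD}=r_0+\sum_{\alpha>0}e_\alpha\otimes e_{-\alpha}+e_{\alpha_{n-1}}\wedge e_{-\alpha_n}$ with $r_0\in\mathfrak{h}(\overline{\mathbb{K}})^{\otimes2}$, $r_0+r_0^{21}=\Omega_0$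 and $(\alpha_n\otimes1+1\otimes\alpha_{n-1})(r_0)=0$; $a\wedge b=a\otimes b-b\otimes a$. $C(r)=\{X\in O(2n,\overline{\mathbb{K}}):(\mathrm{Ad}_X\otimes\mathrm{Ad}_X)(r)=r\}$. *)

theory Defs
  imports "HOL-Algebra.Algebraic_Closure_Type" "Jordan_Normal_Form.Matrix"
begin

section \<open>The field Kbar = algebraic closure of C((h))\<close>

type_synonym Kbar = "complex fls alg_closure"

text \<open>Mirror index: i' = 2n-1-i (0-based version of i' = 2n+1-i).\<close>
definition mir :: "nat \<Rightarrow> nat \<Rightarrow> nat" where
  "mir n i = 2*n - 1 - i"

definition Eu :: "nat \<Rightarrow> nat \<Rightarrow> nat \<Rightarrow> 'a::{zero,one} mat" where
  "Eu N i j = mat N N (\<lambda>(k,l). if k = i \<and> l = j then 1 else 0)"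

definition Smat :: "nat \<Rightarrow> 'a::{zero,one} mat" where
  "Smat n = mat (2*n) (2*n) (\<lambda>(i,j). if i + j = 2*n - 1 then 1 else 0)"

definition orth_grp :: "nat \<Rightarrow> 'a::field mat set" where
  "orth_grp n = {M. M \<in> carrier_mat (2*n) (2*n) \<and> transpose_mat M * Smat n * M = Smat n}"

definition minv :: "nat \<Rightarrow> 'a::field mat \<Rightarrow> 'a mat" where
  "minv N M = (THE Y. Y \<in> carrier_mat N N \<and> M * Y = 1\<^sub>m N \<and> Y * M = 1\<^sub>m N)"

text \<open>A tensor is given by its coordinates: t i j k l is the coefficient of E_ij (x) E_kl
  (and 0 outside the index range).\<close>
type_synonym 'a tensor = "nat \<Rightarrow> nat \<Rightarrow> nat \<Rightarrow> nat \<Rightarrow> 'a"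

definition tens :: "nat \<Rightarrow> 'a::comm_ring_1 mat \<Rightarrow> 'a mat \<Rightarrow> 'a tensor" where
  "tens N A B = (\<lambda>i j k l. if i < N \<and> j < N \<and> k < N \<and> l < N
                             then A $$ (i,j) * B $$ (k,l) else 0)"

definition tadd :: "'a::comm_ring_1 tensor \<Rightarrow> 'a tensor \<Rightarrow> 'a tensor" where
  "tadd t s = (\<lambda>i j k l. t i j k l + s i j k l)"

definition tsum :: "('b \<Rightarrow> 'a::comm_ring_1 tensor) \<Rightarrow> 'b set \<Rightarrow> 'a tensor" where
  "tsum f A = (\<lambda>i j k l. \<Sum>x\<in>A. f x i j k l)"

definition wedge :: "nat \<Rightarrow> 'a::comm_ring_1 mat \<Rightarrow> 'a mat \<Rightarrow> 'a tensor" where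
  "wedge N a b = (\<lambda>i j k l. tens N a b i j k l - tens N b a i j k l)"

definition flip21 :: "'a tensor \<Rightarrow> 'a tensor" where
  "flip21 t = (\<lambda>i j k l. t k l i j)"

text \<open>(Ad_X (x) Ad_X)(t), where Ad_X A = M A M^{-1}.\<close>
definition AdAd :: "nat \<Rightarrow> 'a::field mat \<Rightarrow> 'a tensor \<Rightarrow> 'a tensor" where
  "AdAd N M t = (let Y = minv N M in
     (\<lambda>i j k l. if i < N \<and> j < N \<and> k < N \<and> l < N then
        (\<Sum>p<N. \<Sum>q<N. \<Sum>s<N. \<Sum>u<N.
           M $$ (i,p) * t p q s u * Y $$ (q,j) * M $$ (k,s) * Y $$ (u,l))
      else 0))"

text \<open>(phi (x) 1)(t) and (1 (x) phi)(t) for a linear functional phi on matrices.\<close>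
definition contr1 :: "nat \<Rightarrow> ('a::comm_ring_1 mat \<Rightarrow> 'a) \<Rightarrow> 'a tensor \<Rightarrow> 'a mat" where
  "contr1 N \<phi> t = mat N N (\<lambda>(k,l). \<Sum>i<N. \<Sum>j<N. \<phi> (Eu N i j) * t i j k l)"

definition contr2 :: "nat \<Rightarrow> ('a::comm_ring_1 mat \<Rightarrow> 'a) \<Rightarrow> 'a tensor \<Rightarrow> 'a mat" where
  "contr2 N \<phi> t = mat N N (\<lambda>(i,j). \<Sum>k<N. \<Sum>l<N. \<phi> (Eu N k l) * t i j k l)"

text \<open>Cartan basis H_m = E_mm - E_m'm' (m < n, 0-based); diag(a_1..a_n,-a_n..-a_1) = sum a_m H_m.\<close>
definition Hc :: "nat \<Rightarrow> nat \<Rightarrow> 'a::comm_ring_1 mat" where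
  "Hc n m = Eu (2*n) m m - Eu (2*n) (mir n m) (mir n m)"

definition eps :: "nat \<Rightarrow> 'a mat \<Rightarrow> 'a" where
  "eps m A = A $$ (m,m)"

text \<open>Simple roots alpha_{n-1} = eps_{n-1} - eps_n and alpha_n = eps_{n-1} + eps_n
  (1-based; 0-based indices n-2, n-1).\<close>
definition alpha_nm1 :: "nat \<Rightarrow> 'a::comm_ring_1 mat \<Rightarrow> 'a" where
  "alpha_nm1 n A = eps (n-2) A - eps (n-1) A"
definition alpha_n :: "nat \<Rightarrow> 'a::comm_ring_1 mat \<Rightarrow> 'a" where
  "alpha_n n A = eps (n-2) A + eps (n-1) A"

text \<open>Root vectors, normalized so that <e_alpha, e_-alpha> = 1 for the invariant form
  <A,B> = tr(AB)/2 (w.r.t. which the H_m are orthonormal).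
  Positive roots: eps_i - eps_j and eps_i + eps_j for i < j < n (0-based).\<close>
definition e_minus_pos :: "nat \<Rightarrow> nat \<Rightarrow> nat \<Rightarrow> 'a::comm_ring_1 mat" where
  "e_minus_pos n i j = Eu (2*n) i j - Eu (2*n) (mir n j) (mir n i)"
definition e_minus_neg :: "nat \<Rightarrow> nat \<Rightarrow> nat \<Rightarrow> 'a::comm_ring_1 mat" where
  "e_minus_neg n i j = Eu (2*n) j i - Eu (2*n) (mir n i) (mir n j)"
definition e_plus_pos :: "nat \<Rightarrow> nat \<Rightarrow> nat \<Rightarrow> 'a::comm_ring_1 mat" where
  "e_plus_pos n i j = Eu (2*n) i (mir n j) - Eu (2*n) j (mir n i)"
definition e_plus_neg :: "nat \<Rightarrow> nat \<Rightarrow> nat \<Rightarrow> 'a::comm_ring_1 mat" where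
  "e_plus_neg n i j = Eu (2*n) (mir n j) i - Eu (2*n) (mir n i) j"

definition pos_pairs :: "nat \<Rightarrow> (nat \<times> nat) set" where
  "pos_pairs n = {(i,j). i < j \<and> j < n}"

definition Omega0 :: "nat \<Rightarrow> 'a::comm_ring_1 tensor" where
  "Omega0 n = tsum (\<lambda>m. tens (2*n) (Hc n m) (Hc n m)) {..<n}"

definition rzero :: "nat \<Rightarrow> (nat \<Rightarrow> nat \<Rightarrow> 'a::comm_ring_1) \<Rightarrow> 'a tensor" where
  "rzero n c = tsum (\<lambda>(m,k). (\<lambda>i j p q. c m k * tens (2*n) (Hc n m) (Hc n k) i j p q))
                    ({..<n} \<times> {..<n})"

definition admissible_r0 :: "nat \<Rightarrow> (nat \<Rightarrow> nat \<Rightarrow> 'a::comm_ring_1) \<Rightarrow> bool" where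
  "admissible_r0 n c \<longleftrightarrow>
     tadd (rzero n c) (flip21 (rzero n c)) = Omega0 n \<and>
     contr1 (2*n) (alpha_n n) (rzero n c) + contr2 (2*n) (alpha_nm1 n) (rzero n c) = 0\<^sub>m (2*n) (2*n)"

definition r_BD :: "nat \<Rightarrow> (nat \<Rightarrow> nat \<Rightarrow> 'a::comm_ring_1) \<Rightarrow> 'a tensor" where
  "r_BD n c =
     tadd (rzero n c)
      (tadd (tsum (\<lambda>(i,j). tadd (tens (2*n) (e_minus_pos n i j) (e_minus_neg n i j))
                                (tens (2*n) (e_plus_pos n i j) (e_plus_neg n i j))) (pos_pairs n))
            (wedge (2*n) (e_minus_pos n (n-2) (n-1)) (e_plus_neg n (n-2) (n-1))))"

definition centr :: "nat \<Rightarrow> 'a::field tensor \<Rightarrow> 'a mat set" where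
  "centr n r = {M \<in> orth_grp n. AdAd (2*n) M r = r}"

definition Tdiag :: "nat \<Rightarrow> (nat \<Rightarrow> 'a::field) \<Rightarrow> 'a \<Rightarrow> 'a mat" where
  "Tdiag n t \<eta> = mat (2*n) (2*n) (\<lambda>(i,j).
      if i \<noteq> j then 0
      else if i < n - 1 then t i
      else if i = n - 1 \<or> i = n then \<eta>
      else inverse (t (mir n i)))"

end

theory Submission
  imports Defs "Jordan_Normal_Form.Determinant"
begin

text \<open>The multiplication map \<open>A \<otimes> B \<mapsto> A B\<close> is \<open>Ad\<close>-equivariant and sends \<open>r\<^sub>B\<^sub>D\<close> to the
  diagonal matrix with entries \<open>1/2 + #{j > i. j \<noteq> i'}\<close>, which are pairwise distinct except for
  the middle pair \<open>n-1, n\<close>. Hence an element of \<open>C(r\<^sub>B\<^sub>D)\<close> commutes with that matrix and is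
  diagonal outside the middle \<open>2\<times>2\<close> block. Orthogonality, together with the single coordinate of
  \<open>(Ad\<^sub>X \<otimes> Ad\<^sub>X)(r\<^sub>B\<^sub>D) = r\<^sub>B\<^sub>D\<close> in which the term \<open>e\<^sub>\<alpha>\<^sub>n\<^sub>-\<^sub>1 \<and> e\<^sub>-\<^sub>\<alpha>\<^sub>n\<close> appears,
  forces that block to be \<open>\<plusminus>1\<close>. Conversely, a diagonal orthogonal matrix rescales the coordinate
  \<open>E\<^sub>i\<^sub>j \<otimes> E\<^sub>k\<^sub>l\<close> by \<open>d\<^sub>i d\<^sub>j\<^sup>-\<^sup>1 d\<^sub>k d\<^sub>l\<^sup>-\<^sup>1\<close>, which is \<open>1\<close> on the support of \<open>r\<^sub>0\<close> and of
  \<open>\<Sum>\<^sub>\<alpha>\<^sub>>\<^sub>0 e\<^sub>\<alpha> \<otimes> e\<^sub>-\<^sub>\<alpha>\<close>, and on the wedge term exactly when \<open>d\<^sub>n\<^sub>-\<^sub>1 = d\<^sub>n\<close>.\<close>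

lemma sum_single_support:
  assumes "finite A" "a \<in> A" "\<And>x. x \<in> A \<Longrightarrow> x \<noteq> a \<Longrightarrow> g x = 0"
  shows "sum g A = g a"
  using sum.mono_neutral_right[of A "{a}" g] assms by auto

lemma sum_two_support:
  assumes "finite A" "a \<in> A" "b \<in> A" "a \<noteq> b" "\<And>x. x \<in> A \<Longrightarrow> x \<noteq> a \<Longrightarrow> x \<noteq> b \<Longrightarrow> g x = 0"
  shows "sum g A = g a + g b"
  using sum.mono_neutral_right[of A "{a, b}" g] assms by auto

lemma sum_if_unique:
  assumes "finite A" "\<And>x. x \<in> A \<Longrightarrow> P x \<Longrightarrow> x = a"
  shows "(\<Sum>x\<in>A. if P x then (v::'a::comm_monoid_add) else 0) = (if a \<in> A \<and> P a then v else 0)"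
proof (cases "a \<in> A \<and> P a")
  case True
  then show ?thesis
    using assms by (subst sum_single_support[where a = a]) auto
next
  case False
  then have "(\<Sum>x\<in>A. if P x then v else 0) = 0" using assms(2) by (intro sum.neutral) auto
  then show ?thesis using False by auto
qed

lemma sum_swap_innermost:
  "(\<Sum>j\<in>A. \<Sum>p\<in>B. \<Sum>q\<in>C. \<Sum>s\<in>D. \<Sum>u\<in>E. f j p q s u) =
   (\<Sum>p\<in>B. \<Sum>q\<in>C. \<Sum>s\<in>D. \<Sum>u\<in>E. \<Sum>j\<in>A. (f j p q s u :: 'a::comm_monoid_add))"
  by (subst sum.swap, rule sum.cong[OF refl],
      subst sum.swap, rule sum.cong[OF refl],
      subst sum.swap, rule sum.cong[OF refl], rule sum.swap)

lemma sum4_sparse: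
  fixes A B C E :: "nat \<Rightarrow> 'a::comm_ring_1"
  assumes "\<forall>p<N. p \<noteq> p0 \<longrightarrow> A p = 0" "\<forall>q<N. q \<noteq> q1 \<and> q \<noteq> q2 \<longrightarrow> B q = 0"
    "\<forall>s<N. s \<noteq> s1 \<and> s \<noteq> s2 \<longrightarrow> C s = 0" "\<forall>u<N. u \<noteq> u0 \<longrightarrow> E u = 0"
    "p0 < N" "q1 < N" "q2 < N" "q1 \<noteq> q2" "s1 < N" "s2 < N" "s1 \<noteq> s2" "u0 < N"
  shows "(\<Sum>p<N. \<Sum>q<N. \<Sum>s<N. \<Sum>u<N. A p * t p q s u * B q * C s * E u) =
    A p0 * E u0 * (t p0 q1 s1 u0 * B q1 * C s1 + t p0 q1 s2 u0 * B q1 * C s2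
                 + t p0 q2 s1 u0 * B q2 * C s1 + t p0 q2 s2 u0 * B q2 * C s2)"
proof -
  have inner: "(\<Sum>u<N. A p0 * t p0 q s u * B q * C s * E u) = A p0 * t p0 q s u0 * B q * C s * E u0"
    for q s using assms by (intro sum_single_support) auto
  have middle: "(\<Sum>s<N. \<Sum>u<N. A p0 * t p0 q s u * B q * C s * E u) =
      A p0 * t p0 q s1 u0 * B q * C s1 * E u0 + A p0 * t p0 q s2 u0 * B q * C s2 * E u0" for q
    unfolding inner using assms by (intro sum_two_support) auto
  have "(\<Sum>p<N. \<Sum>q<N. \<Sum>s<N. \<Sum>u<N. A p * t p q s u * B q * C s * E u) =
        (\<Sum>q<N. \<Sum>s<N. \<Sum>u<N. A p0 * t p0 q s u * B q * C s * E u)"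
    using assms by (intro sum_single_support) auto
  also have "\<dots> = (A p0 * t p0 q1 s1 u0 * B q1 * C s1 * E u0 + A p0 * t p0 q1 s2 u0 * B q1 * C s2 * E u0)
     + (A p0 * t p0 q2 s1 u0 * B q2 * C s1 * E u0 + A p0 * t p0 q2 s2 u0 * B q2 * C s2 * E u0)"
    unfolding middle using assms by (intro sum_two_support) auto
  finally show ?thesis by (simp add: algebra_simps)
qed

lemma Eu_index [simp]:
  "i < N \<Longrightarrow> j < N \<Longrightarrow> Eu N a b $$ (i,j) = (if i = a \<and> j = b then 1 else 0)"
  by (simp add: Eu_def)

lemma Eu_carrier [simp]: "Eu N a b \<in> carrier_mat N N" "dim_row (Eu N a b) = N" "dim_col (Eu N a b) = N"
  by (auto simp: Eu_def)

lemma index_mult_mat_sum: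
  assumes "A \<in> carrier_mat N N" "B \<in> carrier_mat N N" "i < N" "j < N"
  shows "(A * B) $$ (i,j) = (\<Sum>k<N. A $$ (i,k) * B $$ (k,j))"
  using assms by (simp add: scalar_prod_def atLeast0LessThan)

lemma minv_eqI:
  assumes A: "A \<in> carrier_mat N N" and B: "B \<in> carrier_mat N N"
    and AB: "A * B = 1\<^sub>m N" and BA: "B * A = 1\<^sub>m N"
  shows "minv N A = (B :: 'a::field mat)"
  unfolding minv_def
proof (rule the_equality)
  fix Y assume Y: "Y \<in> carrier_mat N N \<and> A * Y = 1\<^sub>m N \<and> Y * A = 1\<^sub>m N"
  have "Y = Y * (A * B)" using Y AB right_mult_one_mat by metis
  also have "\<dots> = (Y * A) * B" using Y A B by (intro assoc_mult_mat[symmetric]) auto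
  also have "\<dots> = B" using Y B by simp
  finally show "Y = B" .
qed (use assms in simp)

lemma Smat_carrier [simp]: "Smat n \<in> carrier_mat (2*n) (2*n)"
  by (simp add: Smat_def)

lemma Smat_index: "i < 2*n \<Longrightarrow> j < 2*n \<Longrightarrow> Smat n $$ (i,j) = (if i + j = 2*n-1 then 1 else 0)"
  by (simp add: Smat_def)

lemma index_Smat_mult:
  fixes A :: "'a::comm_ring_1 mat"
  assumes "A \<in> carrier_mat (2*n) (2*n)" "i < 2*n" "j < 2*n"
  shows "(Smat n * A) $$ (i,j) = A $$ (2*n-1-i, j)"
proof -
  have "(Smat n * A) $$ (i,j) = (\<Sum>k<2*n. Smat n $$ (i,k) * A $$ (k,j))"
    using assms by (intro index_mult_mat_sum) auto
  also have "\<dots> = Smat n $$ (i,2*n-1-i) * A $$ (2*n-1-i,j)"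
    using assms by (intro sum_single_support) (auto simp: Smat_index)
  finally show ?thesis using assms by (simp add: Smat_index)
qed

lemma index_mult_Smat:
  fixes A :: "'a::comm_ring_1 mat"
  assumes "A \<in> carrier_mat (2*n) (2*n)" "i < 2*n" "j < 2*n"
  shows "(A * Smat n) $$ (i,j) = A $$ (i, 2*n-1-j)"
proof -
  have "(A * Smat n) $$ (i,j) = (\<Sum>k<2*n. A $$ (i,k) * Smat n $$ (k,j))"
    using assms by (intro index_mult_mat_sum) auto
  also have "\<dots> = A $$ (i,2*n-1-j) * Smat n $$ (2*n-1-j,j)"
    using assms by (intro sum_single_support) (auto simp: Smat_index)
  finally show ?thesis using assms by (simp add: Smat_index)
qed

lemma Smat_mult_Smat: "Smat n * Smat n = (1\<^sub>m (2*n) :: 'a::comm_ring_1 mat)"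
proof (rule eq_matI)
  fix i j assume "i < dim_row (1\<^sub>m (2*n) :: 'a mat)" "j < dim_col (1\<^sub>m (2*n) :: 'a mat)"
  then show "(Smat n * Smat n) $$ (i,j) = (1\<^sub>m (2*n) :: 'a mat) $$ (i,j)"
    by (auto simp: index_Smat_mult Smat_index)
qed (auto simp: Smat_def)

lemma index_transpose_Smat_mult:
  fixes M :: "'a::comm_ring_1 mat"
  assumes M: "M \<in> carrier_mat (2*n) (2*n)" and "i < 2*n" "k < 2*n"
  shows "(transpose_mat M * Smat n * M) $$ (i,k) = (\<Sum>q<2*n. M $$ (2*n-1-q, i) * M $$ (q,k))"
proof -
  have "(transpose_mat M * Smat n * M) $$ (i,k) = (\<Sum>q<2*n. (transpose_mat M * Smat n) $$ (i,q) * M $$ (q,k))"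
    using assms by (intro index_mult_mat_sum) auto
  also have "\<dots> = (\<Sum>q<2*n. M $$ (2*n-1-q, i) * M $$ (q,k))"
    using assms by (intro sum.cong) (auto simp: index_mult_Smat[of "transpose_mat M"])
  finally show ?thesis .
qed

lemma orth_grp_index:
  fixes M :: "'a::field mat"
  assumes "M \<in> orth_grp n" "i < 2*n" "k < 2*n"
  shows "(\<Sum>q<2*n. M $$ (2*n-1-q, i) * M $$ (q,k)) = (if i + k = 2*n-1 then 1 else 0)"
  using assms index_transpose_Smat_mult[of M n i k] by (simp add: orth_grp_def Smat_index)

lemma orth_grp_minv:
  fixes M :: "'a::field mat"
  assumes "M \<in> orth_grp n"
  shows "minv (2*n) M = Smat n * transpose_mat M * Smat n"
    and "minv (2*n) M \<in> carrier_mat (2*n) (2*n)"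
    and "minv (2*n) M * M = 1\<^sub>m (2*n)"
proof -
  define Y where "Y = Smat n * transpose_mat M * Smat n"
  have M: "M \<in> carrier_mat (2*n) (2*n)" and O: "transpose_mat M * Smat n * M = Smat n"
    using assms by (auto simp: orth_grp_def)
  have Mt: "transpose_mat M \<in> carrier_mat (2*n) (2*n)" using M by simp
  have SMt: "Smat n * transpose_mat M \<in> carrier_mat (2*n) (2*n)"
    using Mt by (intro mult_carrier_mat) auto
  have Y: "Y \<in> carrier_mat (2*n) (2*n)" unfolding Y_def using SMt M by (intro mult_carrier_mat) auto
  have "Y * M = (Smat n * transpose_mat M) * (Smat n * M)"
    unfolding Y_def using assoc_mult_mat[OF SMt Smat_carrier M] .
  also have "\<dots> = Smat n * (transpose_mat M * (Smat n * M))"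
    using assoc_mult_mat[OF Smat_carrier Mt mult_carrier_mat[OF Smat_carrier M]] .
  also have "transpose_mat M * (Smat n * M) = Smat n"
    using assoc_mult_mat[OF Mt Smat_carrier M] O by simp
  also have "Smat n * Smat n = (1\<^sub>m (2*n) :: 'a mat)" by (rule Smat_mult_Smat)
  finally have YM: "Y * M = 1\<^sub>m (2*n)" .
  have "minv (2*n) M = Y"
    using minv_eqI[OF M Y mat_mult_left_right_inverse[OF Y M YM] YM] .
  then show "minv (2*n) M = Smat n * transpose_mat M * Smat n"
    and "minv (2*n) M \<in> carrier_mat (2*n) (2*n)" and "minv (2*n) M * M = 1\<^sub>m (2*n)"
    using Y YM by (simp_all add: Y_def)
qed

lemma orth_grp_minv_index:
  fixes M :: "'a::field mat"
  assumes "M \<in> orth_grp n" "q < 2*n" "j < 2*n"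
  shows "minv (2*n) M $$ (q,j) = M $$ (2*n-1-j, 2*n-1-q)"
proof -
  have M: "M \<in> carrier_mat (2*n) (2*n)" using assms by (simp add: orth_grp_def)
  then have SMt: "Smat n * transpose_mat M \<in> carrier_mat (2*n) (2*n)"
    by (intro mult_carrier_mat) auto
  show ?thesis
    using assms M SMt
    by (simp add: orth_grp_minv(1)[OF assms(1)] index_mult_Smat index_Smat_mult)
qed


text \<open>On coordinates, the linear map \<open>A \<otimes> B \<mapsto> A B\<close>.\<close>
definition tensor_mult :: "nat \<Rightarrow> 'a::comm_ring_1 tensor \<Rightarrow> 'a mat" where
  "tensor_mult N t = mat N N (\<lambda>(i,l). \<Sum>j<N. t i j j l)"

lemma tensor_mult_carrier [simp]: "tensor_mult N t \<in> carrier_mat N N"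
  by (simp add: tensor_mult_def)

lemma AdAd_contract_middle:
  fixes M :: "'a::field mat"
  assumes M: "M \<in> carrier_mat N N" and Y: "minv N M \<in> carrier_mat N N"
    and YM: "minv N M * M = 1\<^sub>m N" and il: "i < N" "l < N"
  shows "(\<Sum>j<N. AdAd N M t i j j l) = (\<Sum>p<N. \<Sum>q<N. \<Sum>u<N. M $$ (i,p) * t p q q u * minv N M $$ (u,l))"
proof -
  define Y where "Y = minv N M"
  have delta: "(\<Sum>j<N. Y $$ (q,j) * M $$ (j,s)) = (if q = s then 1 else 0)" if "q < N" "s < N" for q s
    using index_mult_mat_sum[OF Y M that] YM that by (simp add: Y_def)
  have "(\<Sum>j<N. AdAd N M t i j j l) = (\<Sum>j<N. \<Sum>p<N. \<Sum>q<N. \<Sum>s<N. \<Sum>u<N.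
           M $$ (i,p) * t p q s u * Y $$ (q,j) * M $$ (j,s) * Y $$ (u,l))"
    unfolding AdAd_def Let_def Y_def using il by simp
  also have "\<dots> = (\<Sum>p<N. \<Sum>q<N. \<Sum>s<N. \<Sum>u<N. \<Sum>j<N.
           M $$ (i,p) * t p q s u * Y $$ (q,j) * M $$ (j,s) * Y $$ (u,l))"
    by (rule sum_swap_innermost)
  also have "\<dots> = (\<Sum>p<N. \<Sum>q<N. \<Sum>s<N. \<Sum>u<N.
           (M $$ (i,p) * t p q s u * Y $$ (u,l)) * (\<Sum>j<N. Y $$ (q,j) * M $$ (j,s)))"
    by (simp add: sum_distrib_left mult_ac)
  also have "\<dots> = (\<Sum>p<N. \<Sum>q<N. \<Sum>s<N. \<Sum>u<N.
           (M $$ (i,p) * t p q s u * Y $$ (u,l)) * (if q = s then 1 else 0))"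
    by (intro sum.cong refl) (simp add: delta)
  also have "\<dots> = (\<Sum>p<N. \<Sum>q<N. \<Sum>u<N. M $$ (i,p) * t p q q u * Y $$ (u,l))"
  proof (rule sum.cong[OF refl], rule sum.cong[OF refl])
    fix p q assume "q \<in> {..<N}"
    then show "(\<Sum>s<N. \<Sum>u<N. M $$ (i,p) * t p q s u * Y $$ (u,l) * (if q = s then 1 else 0)) =
        (\<Sum>u<N. M $$ (i,p) * t p q q u * Y $$ (u,l))"
      by (subst sum_single_support[where a=q]) auto
  qed
  finally show ?thesis unfolding Y_def .
qed

lemma tensor_mult_AdAd:
  fixes M :: "'a::field mat"
  assumes M: "M \<in> carrier_mat N N" and Y: "minv N M \<in> carrier_mat N N"
    and YM: "minv N M * M = 1\<^sub>m N"
  shows "tensor_mult N (AdAd N M t) = M * tensor_mult N t * minv N M"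
proof (rule eq_matI)
  fix i l assume "i < dim_row (M * tensor_mult N t * minv N M)" "l < dim_col (M * tensor_mult N t * minv N M)"
  then have il: "i < N" "l < N" using M Y by auto
  have "tensor_mult N (AdAd N M t) $$ (i,l) =
      (\<Sum>p<N. \<Sum>q<N. \<Sum>u<N. M $$ (i,p) * t p q q u * minv N M $$ (u,l))"
    using il AdAd_contract_middle[OF M Y YM il] by (simp add: tensor_mult_def)
  also have "\<dots> = (\<Sum>u<N. \<Sum>p<N. \<Sum>q<N. M $$ (i,p) * t p q q u * minv N M $$ (u,l))"
    by (subst sum.swap, rule sum.cong[OF refl], rule sum.swap)
  also have "\<dots> = (\<Sum>u<N. (\<Sum>p<N. M $$ (i,p) * (\<Sum>q<N. t p q q u)) * minv N M $$ (u,l))"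
    by (simp add: sum_distrib_left sum_distrib_right mult_ac)
  also have "\<dots> = (\<Sum>u<N. (M * tensor_mult N t) $$ (i,u) * minv N M $$ (u,l))"
  proof (rule sum.cong[OF refl])
    fix u assume u: "u \<in> {..<N}"
    have "(M * tensor_mult N t) $$ (i,u) = (\<Sum>p<N. M $$ (i,p) * tensor_mult N t $$ (p,u))"
      using il u by (intro index_mult_mat_sum[OF M tensor_mult_carrier]) auto
    also have "\<dots> = (\<Sum>p<N. M $$ (i,p) * (\<Sum>q<N. t p q q u))"
      using u by (intro sum.cong refl) (auto simp: tensor_mult_def)
    finally show "(\<Sum>p<N. M $$ (i,p) * (\<Sum>q<N. t p q q u)) * minv N M $$ (u,l) =
        (M * tensor_mult N t) $$ (i,u) * minv N M $$ (u,l)" by simp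
  qed
  also have "\<dots> = (M * tensor_mult N t * minv N M) $$ (i,l)"
    using il M Y by (intro index_mult_mat_sum[symmetric]) (auto intro: mult_carrier_mat)
  finally show "tensor_mult N (AdAd N M t) $$ (i,l) = (M * tensor_mult N t * minv N M) $$ (i,l)" .
qed (use M Y in \<open>auto simp: tensor_mult_def\<close>)

section \<open>Coordinates of \<open>r\<^sub>B\<^sub>D\<close>\<close>

definition pos_root_part :: "nat \<Rightarrow> 'a::comm_ring_1 tensor" where
  "pos_root_part n = tsum (\<lambda>(i,j). tadd (tens (2*n) (e_minus_pos n i j) (e_minus_neg n i j))
                                       (tens (2*n) (e_plus_pos n i j) (e_plus_neg n i j))) (pos_pairs n)"

text \<open>The coordinates of \<open>\<Sum>\<^sub>\<alpha>\<^sub>>\<^sub>0 e\<^sub>\<alpha> \<otimes> e\<^sub>-\<^sub>\<alpha>\<close>: over all \<open>i < j\<close> with \<open>j \<noteq> i'\<close>,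
  \<open>E\<^sub>i\<^sub>j \<otimes> E\<^sub>j\<^sub>i - E\<^sub>i\<^sub>j \<otimes> E\<^sub>i\<^sub>'\<^sub>j\<^sub>'\<close>.\<close>
definition pos_root_coeff :: "nat \<Rightarrow> nat \<Rightarrow> nat \<Rightarrow> nat \<Rightarrow> nat \<Rightarrow> 'a::comm_ring_1" where
  "pos_root_coeff n i j k l = (if i < j \<and> i + j \<noteq> 2*n - 1 then
     (if k = j \<and> l = i then 1 else 0) - (if k = 2*n-1-i \<and> l = 2*n-1-j then 1 else 0) else 0)"

lemma indicator_mult:
  "(if P then (1::'a::comm_ring_1) else 0) * (if Q then 1 else 0) = (if P \<and> Q then 1 else 0)"
  by simp

lemma root_pair_tensor_coeff:
  assumes "i < 2*n" "j < 2*n" "k < 2*n" "l < 2*n"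
  shows "tadd (tens (2*n) (e_minus_pos n a b) (e_minus_neg n a b))
              (tens (2*n) (e_plus_pos n a b) (e_plus_neg n a b)) i j k l =
   (if i=a \<and> j=b \<and> k=b \<and> l=a then 1 else 0)
 - (if i=a \<and> j=b \<and> k=2*n-1-a \<and> l=2*n-1-b then 1 else 0)
 - (if i=2*n-1-b \<and> j=2*n-1-a \<and> k=b \<and> l=a then 1 else 0)
 + (if i=2*n-1-b \<and> j=2*n-1-a \<and> k=2*n-1-a \<and> l=2*n-1-b then 1 else (0::'a::comm_ring_1))
 + (if i=a \<and> j=2*n-1-b \<and> k=2*n-1-b \<and> l=a then 1 else 0)
 - (if i=a \<and> j=2*n-1-b \<and> k=2*n-1-a \<and> l=b then 1 else 0)
 - (if i=b \<and> j=2*n-1-a \<and> k=2*n-1-b \<and> l=a then 1 else 0)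
 + (if i=b \<and> j=2*n-1-a \<and> k=2*n-1-a \<and> l=b then 1 else 0)"
proof -
  have "(2::nat)*n - 1 - b < 2*n" "(2::nat)*n - 1 - a < 2*n" using assms by auto
  note bounds = assms this
  show ?thesis
    unfolding tadd_def tens_def e_minus_pos_def e_minus_neg_def e_plus_pos_def e_plus_neg_def mir_def
    by (simp only: bounds if_True conj_absorb index_minus_mat Eu_carrier Eu_index refl simp_thms,
        simp only: left_diff_distrib right_diff_distrib indicator_mult conj_assoc,
        simp only: algebra_simps)
qed

lemma pos_root_part_coeff:
  assumes "i < 2*n" "j < 2*n" "k < 2*n" "l < 2*n"
  shows "pos_root_part n i j k l = (pos_root_coeff n i j k l :: 'a::comm_ring_1)"
proof -
  let ?P = "pos_pairs n"
  have finite: "finite ?P"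
    by (rule finite_subset[of _ "{..<n} \<times> {..<n}"]) (auto simp: pos_pairs_def)
  have "pos_root_part n i j k l = (\<Sum>x\<in>?P.
   (if i=fst x \<and> j=snd x \<and> k=snd x \<and> l=fst x then 1 else 0)
 - (if i=fst x \<and> j=snd x \<and> k=2*n-1-fst x \<and> l=2*n-1-snd x then 1 else 0)
 - (if i=2*n-1-snd x \<and> j=2*n-1-fst x \<and> k=snd x \<and> l=fst x then 1 else 0)
 + (if i=2*n-1-snd x \<and> j=2*n-1-fst x \<and> k=2*n-1-fst x \<and> l=2*n-1-snd x then 1 else (0::'a))
 + (if i=fst x \<and> j=2*n-1-snd x \<and> k=2*n-1-snd x \<and> l=fst x then 1 else 0)
 - (if i=fst x \<and> j=2*n-1-snd x \<and> k=2*n-1-fst x \<and> l=snd x then 1 else 0)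
 - (if i=snd x \<and> j=2*n-1-fst x \<and> k=2*n-1-snd x \<and> l=fst x then 1 else 0)
 + (if i=snd x \<and> j=2*n-1-fst x \<and> k=2*n-1-fst x \<and> l=snd x then 1 else 0))"
    unfolding pos_root_part_def tsum_def
    by (rule sum.cong[OF refl]) (simp only: split_beta root_pair_tensor_coeff[OF assms])
  also have "\<dots> =
   (if i<j \<and> j<n \<and> k=j \<and> l=i then 1 else 0)
 - (if i<j \<and> j<n \<and> k=2*n-1-i \<and> l=2*n-1-j then 1 else 0)
 - (if n \<le> i \<and> i < j \<and> k=2*n-1-i \<and> l=2*n-1-j then 1 else 0)
 + (if n \<le> i \<and> i < j \<and> k=j \<and> l=i then 1 else 0)
 + (if i < n \<and> n \<le> j \<and> i + j < 2*n-1 \<and> k=j \<and> l=i then 1 else 0)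
 - (if i < n \<and> n \<le> j \<and> i + j < 2*n-1 \<and> k=2*n-1-i \<and> l=2*n-1-j then 1 else 0)
 - (if i < n \<and> n \<le> j \<and> i + j > 2*n-1 \<and> k=2*n-1-i \<and> l=2*n-1-j then 1 else 0)
 + (if i < n \<and> n \<le> j \<and> i + j > 2*n-1 \<and> k=j \<and> l=i then 1 else 0)"
    \<comment> \<open>each indicator sum has at most one nonzero term, at the pair read off from \<open>(i,j,k,l)\<close>\<close>
    apply (simp only: sum.distrib sum_subtractf)
    apply (subst sum_if_unique[where a="(i,j)"], rule finite, force)+
    apply (subst sum_if_unique[where a="(l,k)"], rule finite, force simp: pos_pairs_def)
    apply (subst sum_if_unique[where a="(2*n-1-j,2*n-1-i)"], rule finite, force simp: pos_pairs_def)
    apply (subst sum_if_unique[where a="(i,2*n-1-j)"], rule finite, force simp: pos_pairs_def)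
    apply (subst sum_if_unique[where a="(i,l)"], rule finite, force simp: pos_pairs_def)
    apply (subst sum_if_unique[where a="(l,i)"], rule finite, force simp: pos_pairs_def)
    apply (subst sum_if_unique[where a="(2*n-1-j,i)"], rule finite, force simp: pos_pairs_def)
    using assms
    by (intro arg_cong2[where f="(+)"] arg_cong2[where f="(-)"] if_cong refl; auto simp: pos_pairs_def)
  also have "\<dots> = pos_root_coeff n i j k l"
    using assms unfolding pos_root_coeff_def
    by (cases "i<j"; cases "j<n"; cases "n \<le> i"; cases "i+j<2*n-1"; cases "i+j = 2*n-1"; simp)
  finally show ?thesis .
qed

definition e_alpha_nm1 :: "nat \<Rightarrow> nat \<Rightarrow> nat \<Rightarrow> 'a::comm_ring_1" where
  "e_alpha_nm1 n i j = (if i = n-2 \<and> j = n-1 then 1 else 0) - (if i = n \<and> j = n+1 then 1 else 0)"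

definition e_neg_alpha_n :: "nat \<Rightarrow> nat \<Rightarrow> nat \<Rightarrow> 'a::comm_ring_1" where
  "e_neg_alpha_n n i j = (if i = n \<and> j = n-2 then 1 else 0) - (if i = n+1 \<and> j = n-1 then 1 else 0)"

lemma wedge_coeff:
  assumes "n \<ge> 2" "i < 2*n" "j < 2*n" "k < 2*n" "l < 2*n"
  shows "wedge (2*n) (e_minus_pos n (n-2) (n-1)) (e_plus_neg n (n-2) (n-1)) i j k l
     = (e_alpha_nm1 n i j * e_neg_alpha_n n k l - e_neg_alpha_n n i j * e_alpha_nm1 n k l :: 'a::comm_ring_1)"
proof -
  have "mir n (n-1) = n" "mir n (n-2) = n+1" using assms by (auto simp: mir_def)
  then show ?thesis using assms
    unfolding wedge_def tens_def e_minus_pos_def e_plus_neg_def e_alpha_nm1_def e_neg_alpha_n_def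
    by (simp add: index_minus_mat)
qed

lemma Hc_index:
  assumes "i < 2*n" "j < 2*n"
  shows "Hc n m $$ (i,j) =
    (if i = j then (if i = m then 1 else 0) - (if i = 2*n-1-m then 1 else 0) else (0::'a::comm_ring_1))"
  using assms unfolding Hc_def mir_def by (simp add: index_minus_mat)

lemma rzero_off_diagonal:
  assumes "i < 2*n" "j < 2*n" "k < 2*n" "l < 2*n" "i \<noteq> j \<or> k \<noteq> l"
  shows "rzero n c i j k l = 0"
  unfolding rzero_def tsum_def using assms
  by (intro sum.neutral) (auto simp: tens_def Hc_index)

lemma rzero_outside:
  assumes "\<not> (i < 2*n \<and> j < 2*n \<and> k < 2*n \<and> l < 2*n)"
  shows "rzero n c i j k l = 0"
  unfolding rzero_def tsum_def using assms by (intro sum.neutral) (auto simp: tens_def)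

lemma Omega0_diagonal:
  assumes "i < 2*n"
  shows "Omega0 n i i i i = (1::'a::comm_ring_1)"
proof -
  have "Omega0 n i i i i = (\<Sum>m<n. Hc n m $$ (i,i) * Hc n m $$ (i,i) :: 'a)"
    unfolding Omega0_def tsum_def tens_def using assms by simp
  also have "\<dots> = 1"
  proof (cases "i < n")
    case True
    then show ?thesis using assms
      by (subst sum_single_support[where a=i]) (auto simp: Hc_index)
  next
    case False
    then show ?thesis using assms
      by (subst sum_single_support[where a="2*n-1-i"]) (auto simp: Hc_index)
  qed
  finally show ?thesis .
qed

lemma rzero_diagonal:
  assumes "admissible_r0 n (c :: nat \<Rightarrow> nat \<Rightarrow> 'a::field_char_0)" "i < 2*n"
  shows "rzero n c i i i i = 1/2"
proof -
  have "tadd (rzero n c) (flip21 (rzero n c)) i i i i = Omega0 n i i i i"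
    using assms(1) by (simp add: admissible_r0_def)
  then have "rzero n c i i i i + rzero n c i i i i = 1"
    using Omega0_diagonal[OF assms(2)] by (simp add: tadd_def flip21_def)
  then show ?thesis by (simp add: field_simps)
qed

lemma r_BD_decompose:
  "r_BD n c = tadd (rzero n c)
     (tadd (pos_root_part n) (wedge (2*n) (e_minus_pos n (n-2) (n-1)) (e_plus_neg n (n-2) (n-1))))"
  unfolding r_BD_def pos_root_part_def ..

lemma r_BD_coeff:
  assumes "n \<ge> 2" "i < 2*n" "j < 2*n" "k < 2*n" "l < 2*n"
  shows "r_BD n c i j k l = rzero n c i j k l + pos_root_coeff n i j k l
           + (e_alpha_nm1 n i j * e_neg_alpha_n n k l - e_neg_alpha_n n i j * e_alpha_nm1 n k l)"
  unfolding r_BD_decompose tadd_def pos_root_part_coeff[OF assms(2-5)] wedge_coeff[OF assms]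
  by (simp add: add.assoc)

lemma r_BD_outside:
  fixes c :: "nat \<Rightarrow> nat \<Rightarrow> 'a::comm_ring_1"
  assumes "\<not> (i < 2*n \<and> j < 2*n \<and> k < 2*n \<and> l < 2*n)"
  shows "r_BD n c i j k l = 0"
proof -
  have "(pos_root_part n i j k l :: 'a) = 0"
    unfolding pos_root_part_def tsum_def using assms
    by (intro sum.neutral) (auto simp: tens_def tadd_def split: prod.splits)
  moreover have "wedge (2*n) (e_minus_pos n (n-2) (n-1)) (e_plus_neg n (n-2) (n-1)) i j k l = (0::'a)"
    using assms by (auto simp: wedge_def tens_def)
  ultimately show ?thesis
    unfolding r_BD_decompose tadd_def rzero_outside[OF assms] by simp
qed

lemma r_BD_middle_coeffs:
  assumes "n \<ge> 3"
  shows "r_BD n c (n-2) (n-1) (n-1) (n-2) = 1" and "r_BD n c (n-2) (n-1) n (n-2) = 1"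
    and "r_BD n c (n-2) n n (n-2) = 1" and "r_BD n c (n-2) n (n-1) (n-2) = 0"
proof -
  have expand: "r_BD n c (n-2) j k (n-2) = rzero n c (n-2) j k (n-2) + pos_root_coeff n (n-2) j k (n-2)
      + (e_alpha_nm1 n (n-2) j * e_neg_alpha_n n k (n-2) - e_neg_alpha_n n (n-2) j * e_alpha_nm1 n k (n-2))"
    if "j \<in> {n-1, n}" "k \<in> {n-1, n}" for j k
    using that assms by (intro r_BD_coeff) auto
  have rzero: "rzero n c (n-2) j k (n-2) = 0" if "j \<in> {n-1, n}" "k \<in> {n-1, n}" for j k
    using that assms by (intro rzero_off_diagonal) auto
  have e: "e_alpha_nm1 n (n-2) (n-1) = 1" "e_alpha_nm1 n (n-2) n = 0"
      "e_neg_alpha_n n (n-1) (n-2) = 0" "e_neg_alpha_n n n (n-2) = 1" "e_neg_alpha_n n (n-2) j = 0"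
    for j using assms by (auto simp: e_alpha_nm1_def e_neg_alpha_n_def)
  have p: "pos_root_coeff n (n-2) (n-1) (n-1) (n-2) = 1" "pos_root_coeff n (n-2) (n-1) n (n-2) = 0"
      "pos_root_coeff n (n-2) n n (n-2) = 1" "pos_root_coeff n (n-2) n (n-1) (n-2) = 0"
    using assms by (auto simp: pos_root_coeff_def)
  show "r_BD n c (n-2) (n-1) (n-1) (n-2) = 1" and "r_BD n c (n-2) (n-1) n (n-2) = 1"
    and "r_BD n c (n-2) n n (n-2) = 1" and "r_BD n c (n-2) n (n-1) (n-2) = 0"
    by (simp_all only: expand rzero e p insert_iff simp_thms) simp_all
qed


section \<open>The image of \<open>r\<^sub>B\<^sub>D\<close> under the multiplication map\<close>

definition upper_count :: "nat \<Rightarrow> nat \<Rightarrow> nat" where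
  "upper_count n i = card {j \<in> {..<2*n}. i < j \<and> i + j \<noteq> 2*n-1}"

lemma upper_count_eq:
  assumes "i < 2*n"
  shows "upper_count n i = (if i < n then 2*n-2-i else 2*n-1-i)"
proof (cases "i < n")
  case True
  then have "{j \<in> {..<2*n}. i < j \<and> i + j \<noteq> 2*n-1} = {i+1..<2*n} - {2*n-1-i}"
    and "2*n-1-i \<in> {i+1..<2*n}" by auto
  then show ?thesis using True by (simp add: upper_count_def)
next
  case False
  then have "{j \<in> {..<2*n}. i < j \<and> i + j \<noteq> 2*n-1} = {i+1..<2*n}" by auto
  then show ?thesis using False by (simp add: upper_count_def)
qed

lemma upper_count_eq_iff:
  assumes "i < 2*n" "k < 2*n" "upper_count n i = upper_count n k" "i \<noteq> k"
  shows "i \<in> {n-1, n} \<and> k \<in> {n-1, n}"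
  using assms(3,4) unfolding upper_count_eq[OF assms(1)] upper_count_eq[OF assms(2)]
  using assms(1,2) by (auto split: if_splits)

lemma contract_rzero:
  fixes c :: "nat \<Rightarrow> nat \<Rightarrow> 'a::field_char_0"
  assumes "admissible_r0 n c" "i < 2*n" "l < 2*n"
  shows "(\<Sum>j<2*n. rzero n c i j j l) = (if i = l then 1/2 else 0)"
proof -
  have "(\<Sum>j<2*n. rzero n c i j j l) = rzero n c i i i l"
    using assms by (intro sum_single_support) (auto intro: rzero_off_diagonal)
  then show ?thesis
    using assms by (auto simp: rzero_diagonal rzero_off_diagonal)
qed

lemma contract_pos_root_coeff:
  assumes "i < 2*n" "l < 2*n"
  shows "(\<Sum>j<2*n. pos_root_coeff n i j j l) =
    (if i = l then of_nat (upper_count n i) else (0::'a::comm_ring_1))"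
proof -
  have "pos_root_coeff n i j j l = (if i < j \<and> i + j \<noteq> 2*n-1 \<and> l = i then 1 else (0::'a))" for j
  proof (cases "i < j \<and> i + j \<noteq> 2*n-1")
    case True
    then have "\<not> (j = 2*n-1-i \<and> l = 2*n-1-j)" using assms by auto
    with True show ?thesis
      unfolding pos_root_coeff_def by (simp only: if_True if_False simp_thms diff_zero)
  next
    case False
    then have "\<not> (i < j \<and> i + j \<noteq> 2*n-1 \<and> l = i)" by blast
    with False show ?thesis
      unfolding pos_root_coeff_def by (simp only: if_False)
  qed
  then have "(\<Sum>j<2*n. pos_root_coeff n i j j l) =
      (\<Sum>j<2*n. if i < j \<and> i + j \<noteq> 2*n-1 \<and> l = i then 1 else (0::'a))"
    by simp
  also have "\<dots> = (if i = l then (\<Sum>j\<in>{j \<in> {..<2*n}. i < j \<and> i + j \<noteq> 2*n-1}. 1) else 0)"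
    by (cases "i = l") (simp_all add: sum.inter_filter[symmetric])
  also have "\<dots> = (if i = l then of_nat (upper_count n i) else 0)"
    unfolding upper_count_def by (simp only: sum_constant mult_1_right)
  finally show ?thesis .
qed

lemma contract_wedge_coeff:
  assumes "n \<ge> 3" "i < 2*n" "l < 2*n"
  shows "(\<Sum>j<2*n. e_alpha_nm1 n i j * e_neg_alpha_n n j l - e_neg_alpha_n n i j * e_alpha_nm1 n j l)
    = (0::'a::comm_ring_1)"
proof -
  have "(\<Sum>j<2*n. e_alpha_nm1 n i j * e_neg_alpha_n n j l) = e_alpha_nm1 n i (n+1) * e_neg_alpha_n n (n+1) l"
    using assms by (intro sum_single_support) (auto simp: e_alpha_nm1_def e_neg_alpha_n_def)
  also have "\<dots> = (if i = n \<and> l = n-1 then 1 else 0)"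
    using assms by (auto simp: e_alpha_nm1_def e_neg_alpha_n_def)
  also have "\<dots> = e_neg_alpha_n n i (n-2) * e_alpha_nm1 n (n-2) l"
    using assms by (auto simp: e_alpha_nm1_def e_neg_alpha_n_def)
  also have "\<dots> = (\<Sum>j<2*n. e_neg_alpha_n n i j * e_alpha_nm1 n j l)"
    using assms by (intro sum_single_support[symmetric]) (auto simp: e_alpha_nm1_def e_neg_alpha_n_def)
  finally show ?thesis by (simp add: sum_subtractf)
qed

lemma tensor_mult_r_BD:
  fixes c :: "nat \<Rightarrow> nat \<Rightarrow> 'a::field_char_0"
  assumes "admissible_r0 n c" "n \<ge> 3"
  shows "tensor_mult (2*n) (r_BD n c) = mat_diag (2*n) (\<lambda>i. 1/2 + of_nat (upper_count n i))"
proof (rule eq_matI)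
  fix i l assume "i < dim_row (mat_diag (2*n) (\<lambda>i. 1/2 + of_nat (upper_count n i) :: 'a))"
    "l < dim_col (mat_diag (2*n) (\<lambda>i. 1/2 + of_nat (upper_count n i) :: 'a))"
  then have il: "i < 2*n" "l < 2*n" by (auto simp: mat_diag_def)
  have "(\<Sum>j<2*n. r_BD n c i j j l) = (\<Sum>j<2*n. rzero n c i j j l) + (\<Sum>j<2*n. pos_root_coeff n i j j l)
      + (\<Sum>j<2*n. e_alpha_nm1 n i j * e_neg_alpha_n n j l - e_neg_alpha_n n i j * e_alpha_nm1 n j l)"
    using assms il by (simp add: r_BD_coeff sum.distrib)
  then show "tensor_mult (2*n) (r_BD n c) $$ (i,l) =
      mat_diag (2*n) (\<lambda>i. 1/2 + of_nat (upper_count n i)) $$ (i,l)"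
    using assms il
    by (simp add: tensor_mult_def mat_diag_def contract_rzero contract_pos_root_coeff contract_wedge_coeff)
qed (simp_all add: tensor_mult_def carrier_matD[OF mat_diag_dim])


section \<open>Elements of the centralizer\<close>

lemma mat_diag_commute_index:
  fixes M :: "'a::idom mat"
  assumes M: "M \<in> carrier_mat N N" and comm: "mat_diag N \<delta> * M = M * mat_diag N \<delta>"
    and "i < N" "k < N" "M $$ (i,k) \<noteq> 0"
  shows "\<delta> i = \<delta> k"
proof -
  have "(mat_diag N \<delta> * M) $$ (i,k) = (M * mat_diag N \<delta>) $$ (i,k)"
    using comm by simp
  then have "\<delta> i * M $$ (i,k) = M $$ (i,k) * \<delta> k"
    using assms by (simp add: mat_diag_mult_left[OF M] mat_diag_mult_right[OF M])
  then show ?thesis using assms(5) by (simp add: mult.commute)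
qed

lemma middle_block_scalar:
  fixes a b c d :: "'a::field_char_0"
  assumes "c*a + a*c = 0" and "d*b + b*d = 0" and "c*b + a*d = 1" and "d*c + d*d + c*d = 1"
  shows "b = 0 \<and> c = 0 \<and> a = d \<and> (d = 1 \<or> d = -1)"
proof -
  have ac: "a*c = 0" and bd: "b*d = 0" using assms(1,2) by (simp_all add: mult.commute)
  have "a \<noteq> 0"
  proof
    assume "a = 0"
    then have "b \<noteq> 0" using assms(3) by auto
    then have "d = 0" using bd by simp
    then show False using assms(4) by simp
  qed
  then have c: "c = 0" using ac by simp
  then have ad: "a*d = 1" using assms(3) by simp
  then have b: "b = 0" using bd by auto
  have dd: "d*d = 1" using assms(4) c by simp
  have "a = a * (d*d)" using dd by simp
  also have "\<dots> = (a*d) * d" by (simp only: mult.assoc)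
  finally have "a = d" using ad by simp
  moreover have "(d - 1) * (d + 1) = 0" using dd by (simp add: algebra_simps)
  then have "d = 1 \<or> d = -1" by (auto simp: eq_neg_iff_add_eq_0)
  ultimately show ?thesis using b c by simp
qed

context
  fixes n :: nat and c :: "nat \<Rightarrow> nat \<Rightarrow> 'a::field_char_0" and M :: "'a mat"
  assumes n3: "n \<ge> 3" and adm: "admissible_r0 n c" and orth: "M \<in> orth_grp n"
    and invariant: "AdAd (2*n) M (r_BD n c) = r_BD n c"
begin

text \<open>\<open>M\<close> commutes with the diagonal matrix \<open>tensor_mult (2*n) (r_BD n c)\<close>, whose entries are
  distinct except at the middle pair \<open>n-1, n\<close>.\<close>
lemma centr_entry_zero:
  assumes "i < 2*n" "k < 2*n" "i \<noteq> k" "\<not> (i \<in> {n-1, n} \<and> k \<in> {n-1, n})"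
  shows "M $$ (i,k) = 0"
proof (rule ccontr)
  assume nz: "M $$ (i,k) \<noteq> 0"
  define D where "D = mat_diag (2*n) (\<lambda>i. 1/2 + of_nat (upper_count n i) :: 'a)"
  have Mc: "M \<in> carrier_mat (2*n) (2*n)" using orth by (simp add: orth_grp_def)
  have D: "D \<in> carrier_mat (2*n) (2*n)" by (simp add: D_def)
  note Y = orth_grp_minv(2,3)[OF orth]
  have "D = M * D * minv (2*n) M"
    using tensor_mult_AdAd[OF Mc Y, of "r_BD n c"] tensor_mult_r_BD[OF adm n3] invariant
    by (simp add: D_def)
  then have "D * M = (M * D) * (minv (2*n) M * M)"
    using assoc_mult_mat[OF mult_carrier_mat[OF Mc D] Y(1) Mc] by simp
  also have "\<dots> = M * D" using Y(2) Mc D by simp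
  finally have "1/2 + of_nat (upper_count n i) = (1/2 + of_nat (upper_count n k) :: 'a)"
    using mat_diag_commute_index[OF Mc _ assms(1,2) nz] unfolding D_def by blast
  then have "upper_count n i = upper_count n k" by simp
  then show False using upper_count_eq_iff assms by blast
qed

lemma centr_diag_mirror:
  assumes "i < 2*n" "i \<notin> {n-1, n}"
  shows "M $$ (i,i) * M $$ (2*n-1-i, 2*n-1-i) = 1"
proof -
  have "(\<Sum>q<2*n. M $$ (2*n-1-q, i) * M $$ (q, 2*n-1-i)) = M $$ (i,i) * M $$ (2*n-1-i, 2*n-1-i)"
  proof (subst sum_single_support[where a="2*n-1-i"])
    fix q assume "q \<in> {..<2*n}" "q \<noteq> 2*n-1-i"
    then show "M $$ (2*n-1-q, i) * M $$ (q, 2*n-1-i) = 0"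
      using assms by (simp add: centr_entry_zero)
  qed (use assms in \<open>auto simp: Suc_diff_Suc\<close>)
  then show ?thesis using orth_grp_index[OF orth, of i "2*n-1-i"] assms by simp
qed

lemma centr_middle_block_orth:
  shows "M$$(n,n-1) * M$$(n-1,n-1) + M$$(n-1,n-1) * M$$(n,n-1) = 0"
    and "M$$(n,n) * M$$(n-1,n) + M$$(n-1,n) * M$$(n,n) = 0"
    and "M$$(n,n-1) * M$$(n-1,n) + M$$(n-1,n-1) * M$$(n,n) = 1"
proof -
  have middle: "M$$(n,i) * M$$(n-1,k) + M$$(n-1,i) * M$$(n,k) = (if i + k = 2*n-1 then 1 else 0)"
    if "i \<in> {n-1, n}" "k \<in> {n-1, n}" for i k
  proof -
    have "2*n-1-(n-1) = n" "2*n-1-n = n-1" using n3 by auto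
    moreover have "M $$ (q,k) = 0" if "q < 2*n" "q \<noteq> n-1" "q \<noteq> n" for q
      using that \<open>k \<in> {n-1, n}\<close> n3 by (intro centr_entry_zero) auto
    ultimately have "(\<Sum>q<2*n. M $$ (2*n-1-q, i) * M $$ (q,k)) = M$$(n,i) * M$$(n-1,k) + M$$(n-1,i) * M$$(n,k)"
      using n3 by (subst sum_two_support[where a="n-1" and b=n]) auto
    then show ?thesis using orth_grp_index[OF orth, of i k] that n3 by auto
  qed
  have "(n-1) + (n-1) \<noteq> 2*n-1" "n + n \<noteq> 2*n-1" "(n-1) + n = 2*n-1" using n3 by auto
  then show "M$$(n,n-1) * M$$(n-1,n-1) + M$$(n-1,n-1) * M$$(n,n-1) = 0"
    and "M$$(n,n) * M$$(n-1,n) + M$$(n-1,n) * M$$(n,n) = 0"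
    and "M$$(n,n-1) * M$$(n-1,n) + M$$(n-1,n-1) * M$$(n,n) = 1"
    using middle[of "n-1" "n-1"] middle[of n n] middle[of "n-1" n] by (simp_all only: insert_iff simp_thms if_False if_True)
qed

lemma centr_minv_entry_zero:
  assumes "q < 2*n" "j < 2*n" "q \<noteq> j" "\<not> (q \<in> {n-1, n} \<and> j \<in> {n-1, n})"
  shows "minv (2*n) M $$ (q,j) = 0"
proof -
  have "2*n-1-j \<noteq> 2*n-1-q" "\<not> (2*n-1-j \<in> {n-1, n} \<and> 2*n-1-q \<in> {n-1, n})"
    using assms by auto
  then show ?thesis
    using assms orth_grp_minv_index[OF orth assms(1,2)] by (simp add: centr_entry_zero)
qed

text \<open>The coordinate \<open>E\<^sub>n\<^sub>-\<^sub>2\<^sub>,\<^sub>n\<^sub>-\<^sub>1 \<otimes> E\<^sub>n\<^sub>,\<^sub>n\<^sub>-\<^sub>2\<close> of the invariance equation; it sees the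
  wedge term \<open>e\<^sub>\<alpha>\<^sub>n\<^sub>-\<^sub>1 \<and> e\<^sub>-\<^sub>\<alpha>\<^sub>n\<close>.\<close>
lemma centr_AdAd_middle_coeff:
  "AdAd (2*n) M (r_BD n c) (n-2) (n-1) n (n-2) = M$$(n-2,n-2) * M$$(n+1,n+1) *
      (M$$(n,n) * M$$(n,n-1) + M$$(n,n) * M$$(n,n) + M$$(n,n-1) * M$$(n,n))"
proof -
  let ?Y = "minv (2*n) M"
  have bounds: "n-2 < 2*n" "n-1 < 2*n" "n < 2*n" "n+1 < 2*n" using n3 by auto
  have "AdAd (2*n) M (r_BD n c) (n-2) (n-1) n (n-2) = (\<Sum>p<2*n. \<Sum>q<2*n. \<Sum>s<2*n. \<Sum>u<2*n.
       M $$ (n-2,p) * r_BD n c p q s u * ?Y $$ (q,n-1) * M $$ (n,s) * ?Y $$ (u,n-2))"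
    unfolding AdAd_def Let_def using bounds by simp
  also have "\<dots> = M$$(n-2,n-2) * ?Y$$(n-2,n-2) *
     (r_BD n c (n-2) (n-1) (n-1) (n-2) * ?Y$$(n-1,n-1) * M$$(n,n-1)
    + r_BD n c (n-2) (n-1) n (n-2) * ?Y$$(n-1,n-1) * M$$(n,n)
    + r_BD n c (n-2) n (n-1) (n-2) * ?Y$$(n,n-1) * M$$(n,n-1)
    + r_BD n c (n-2) n n (n-2) * ?Y$$(n,n-1) * M$$(n,n))"
  proof (rule sum4_sparse)
    show "\<forall>p<2*n. p \<noteq> n-2 \<longrightarrow> M $$ (n-2,p) = 0"
      and "\<forall>s<2*n. s \<noteq> n-1 \<and> s \<noteq> n \<longrightarrow> M $$ (n,s) = 0"
      using n3 by (auto intro: centr_entry_zero)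
    show "\<forall>q<2*n. q \<noteq> n-1 \<and> q \<noteq> n \<longrightarrow> ?Y $$ (q,n-1) = 0"
    proof (intro allI impI)
      fix q assume "q < 2*n" "q \<noteq> n-1 \<and> q \<noteq> n"
      then show "?Y $$ (q,n-1) = 0" using bounds by (intro centr_minv_entry_zero) auto
    qed
    show "\<forall>u<2*n. u \<noteq> n-2 \<longrightarrow> ?Y $$ (u,n-2) = 0"
    proof (intro allI impI)
      fix u assume "u < 2*n" "u \<noteq> n-2"
      moreover have "n-2 \<notin> {n-1, n}" using n3 by auto
      ultimately show "?Y $$ (u,n-2) = 0" using bounds by (intro centr_minv_entry_zero) auto
    qed
  qed (use bounds in auto)
  also have "\<dots> = M$$(n-2,n-2) * M$$(n+1,n+1) *
      (M$$(n,n) * M$$(n,n-1) + M$$(n,n) * M$$(n,n) + M$$(n,n-1) * M$$(n,n))"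
  proof -
    have "?Y$$(n-2,n-2) = M$$(n+1,n+1)" "?Y$$(n-1,n-1) = M$$(n,n)" "?Y$$(n,n-1) = M$$(n,n-1)"
      using orth_grp_minv_index[OF orth] bounds n3 by (auto simp: Suc_diff_Suc numeral_2_eq_2)
    then show ?thesis unfolding r_BD_middle_coeffs[OF n3] by simp
  qed
  finally show ?thesis .
qed

lemma centr_middle_block_invariance:
  "M$$(n,n) * M$$(n,n-1) + M$$(n,n) * M$$(n,n) + M$$(n,n-1) * M$$(n,n) = 1"
proof -
  have "1 = AdAd (2*n) M (r_BD n c) (n-2) (n-1) n (n-2)"
    using invariant r_BD_middle_coeffs(2)[OF n3] by simp
  also have "\<dots> = M$$(n-2,n-2) * M$$(n+1,n+1) *
      (M$$(n,n) * M$$(n,n-1) + M$$(n,n) * M$$(n,n) + M$$(n,n-1) * M$$(n,n))"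
    by (rule centr_AdAd_middle_coeff)
  also have "M$$(n-2,n-2) * M$$(n+1,n+1) = 1"
  proof -
    have "n-2 < 2*n" "n-2 \<notin> {n-1, n}" "2*n-1-(n-2) = n+1" using n3 by auto
    then show ?thesis using centr_diag_mirror by metis
  qed
  finally show ?thesis by simp
qed

lemma centr_middle_block:
  "M$$(n-1,n) = 0 \<and> M$$(n,n-1) = 0 \<and> M$$(n-1,n-1) = M$$(n,n) \<and> (M$$(n,n) = 1 \<or> M$$(n,n) = -1)"
  using middle_block_scalar[OF centr_middle_block_orth centr_middle_block_invariance] .

lemma centr_eq_Tdiag: "M = Tdiag n (\<lambda>i. M $$ (i,i)) (M $$ (n,n))"
proof (rule eq_matI)
  fix i k assume "i < dim_row (Tdiag n (\<lambda>i. M $$ (i,i)) (M $$ (n,n)))"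
    "k < dim_col (Tdiag n (\<lambda>i. M $$ (i,i)) (M $$ (n,n)))"
  then have ik: "i < 2*n" "k < 2*n" by (auto simp: Tdiag_def)
  show "M $$ (i,k) = Tdiag n (\<lambda>i. M $$ (i,i)) (M $$ (n,n)) $$ (i,k)"
  proof (cases "i = k")
    case False
    then have "M $$ (i,k) = 0"
      using centr_middle_block ik by (cases "i \<in> {n-1, n} \<and> k \<in> {n-1, n}") (auto intro: centr_entry_zero)
    then show ?thesis using ik False by (simp add: Tdiag_def)
  next
    case True
    consider "i < n-1" | "i \<in> {n-1, n}" | "i > n" by fastforce
    then show ?thesis
    proof cases
      case 3
      then have "M $$ (i,i) * M $$ (2*n-1-i, 2*n-1-i) = 1"
        using centr_diag_mirror[OF ik(1)] by auto
      then have "M $$ (i,i) = inverse (M $$ (2*n-1-i, 2*n-1-i))"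
        by (metis inverse_unique mult.commute)
      moreover have "\<not> i < n-1" "i \<noteq> n-1" "i \<noteq> n" using 3 by auto
      ultimately show ?thesis using True ik by (simp add: Tdiag_def mir_def)
    qed (use True ik centr_middle_block in \<open>auto simp: Tdiag_def\<close>)
  qed
qed (use orth in \<open>auto simp: Tdiag_def orth_grp_def\<close>)

lemma centr_diag_nonzero:
  assumes "i < n-1"
  shows "M $$ (i,i) \<noteq> 0"
proof -
  have "i < 2*n" "i \<notin> {n-1, n}" using assms by auto
  then show ?thesis using centr_diag_mirror by force
qed

end

lemma centr_subset_Tdiag:
  fixes c :: "nat \<Rightarrow> nat \<Rightarrow> 'a::field_char_0"
  assumes "n \<ge> 3" "admissible_r0 n c"
  shows "centr n (r_BD n c) \<subseteq> {Tdiag n t \<eta> | t \<eta>. (\<forall>i < n-1. t i \<noteq> 0) \<and> (\<eta> = 1 \<or> \<eta> = -1)}"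
proof
  fix M assume "M \<in> centr n (r_BD n c)"
  then have "M \<in> orth_grp n" "AdAd (2*n) M (r_BD n c) = r_BD n c" by (auto simp: centr_def)
  note facts = assms this
  show "M \<in> {Tdiag n t \<eta> | t \<eta>. (\<forall>i < n-1. t i \<noteq> 0) \<and> (\<eta> = 1 \<or> \<eta> = -1)}"
    using centr_eq_Tdiag[OF facts] centr_diag_nonzero[OF facts] centr_middle_block[OF facts] by blast
qed


section \<open>Diagonal elements of the centralizer\<close>

lemma mat_diag_index: "i < N \<Longrightarrow> j < N \<Longrightarrow> mat_diag N d $$ (i,j) = (if i = j then d i else 0)"
  by (simp add: mat_diag_def)

lemma minv_mat_diag:
  fixes d :: "nat \<Rightarrow> 'a::field"
  assumes "\<forall>i<N. d i \<noteq> 0"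
  shows "minv N (mat_diag N d) = mat_diag N (\<lambda>i. inverse (d i))"
proof (rule minv_eqI)
  have "mat_diag N (\<lambda>i. d i * inverse (d i)) = 1\<^sub>m N" "mat_diag N (\<lambda>i. inverse (d i) * d i) = 1\<^sub>m N"
    using assms by (auto simp: mat_diag_def)
  then show "mat_diag N d * mat_diag N (\<lambda>i. inverse (d i)) = 1\<^sub>m N"
    and "mat_diag N (\<lambda>i. inverse (d i)) * mat_diag N d = 1\<^sub>m N" by simp_all
qed auto

lemma AdAd_mat_diag:
  fixes d :: "nat \<Rightarrow> 'a::field"
  assumes "\<forall>i<N. d i \<noteq> 0" "i < N" "j < N" "k < N" "l < N"
  shows "AdAd N (mat_diag N d) t i j k l = d i * inverse (d j) * d k * inverse (d l) * t i j k l"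
proof -
  let ?D = "mat_diag N d" and ?E = "mat_diag N (\<lambda>i. inverse (d i))"
  have "AdAd N ?D t i j k l =
      (\<Sum>p<N. \<Sum>q<N. \<Sum>s<N. \<Sum>u<N. ?D $$ (i,p) * t p q s u * ?E $$ (q,j) * ?D $$ (k,s) * ?E $$ (u,l))"
    unfolding AdAd_def Let_def minv_mat_diag[OF assms(1)] using assms by simp
  also have "\<dots> = (\<Sum>q<N. \<Sum>s<N. \<Sum>u<N. ?D $$ (i,i) * t i q s u * ?E $$ (q,j) * ?D $$ (k,s) * ?E $$ (u,l))"
    using assms by (intro sum_single_support) (auto simp: mat_diag_index)
  also have "\<dots> = (\<Sum>s<N. \<Sum>u<N. ?D $$ (i,i) * t i j s u * ?E $$ (j,j) * ?D $$ (k,s) * ?E $$ (u,l))"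
    using assms by (intro sum_single_support) (auto simp: mat_diag_index)
  also have "\<dots> = (\<Sum>u<N. ?D $$ (i,i) * t i j k u * ?E $$ (j,j) * ?D $$ (k,k) * ?E $$ (u,l))"
    using assms by (intro sum_single_support) (auto simp: mat_diag_index)
  also have "\<dots> = ?D $$ (i,i) * t i j k l * ?E $$ (j,j) * ?D $$ (k,k) * ?E $$ (l,l)"
    using assms by (intro sum_single_support) (auto simp: mat_diag_index)
  finally show ?thesis using assms by (simp add: mat_diag_index)
qed

lemma AdAd_outside:
  "\<not> (i < N \<and> j < N \<and> k < N \<and> l < N) \<Longrightarrow> AdAd N M t i j k l = 0"
  by (auto simp: AdAd_def Let_def)

lemma mat_diag_in_orth_grp:
  fixes d :: "nat \<Rightarrow> 'a::field"
  assumes "\<forall>i<2*n. d (2*n-1-i) * d i = 1"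
  shows "mat_diag (2*n) d \<in> orth_grp n"
proof -
  let ?D = "mat_diag (2*n) d"
  have "transpose_mat ?D * Smat n * ?D = Smat n"
  proof (rule eq_matI)
    fix i k assume "i < dim_row (Smat n :: 'a mat)" "k < dim_col (Smat n :: 'a mat)"
    then have ik: "i < 2*n" "k < 2*n" by (auto simp: Smat_def)
    have "(transpose_mat ?D * Smat n * ?D) $$ (i,k) = (\<Sum>q<2*n. ?D $$ (2*n-1-q, i) * ?D $$ (q,k))"
      using ik by (intro index_transpose_Smat_mult) auto
    also have "\<dots> = ?D $$ (i,i) * ?D $$ (2*n-1-i, k)"
      using ik by (subst sum_single_support[where a="2*n-1-i"]) (auto simp: mat_diag_index)
    finally show "(transpose_mat ?D * Smat n * ?D) $$ (i,k) = Smat n $$ (i,k)"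
      using ik assms by (auto simp: mat_diag_index Smat_index)
  qed (auto simp: Smat_def mat_diag_def)
  then show ?thesis by (simp add: orth_grp_def)
qed

context
  fixes n :: nat and d :: "nat \<Rightarrow> 'a::field" and \<eta> :: 'a
  assumes n3: "n \<ge> 3" and d_mirror: "\<forall>i<2*n. d (2*n-1-i) * d i = 1"
    and d_middle: "d (n-1) = \<eta>" "d n = \<eta>" and eta_square: "\<eta> * \<eta> = 1"
begin

lemma mirror_diag_nonzero: "i < 2*n \<Longrightarrow> d i \<noteq> 0"
  using d_mirror by force

lemma mirror_diag_inverse: "i < 2*n \<Longrightarrow> d (2*n-1-i) = inverse (d i)"
  using d_mirror by (metis inverse_unique mult.commute)

lemma pos_root_coeff_scaling:
  assumes "i < 2*n" "j < 2*n" "k < 2*n" "l < 2*n"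
  shows "d i * inverse (d j) * d k * inverse (d l) * pos_root_coeff n i j k l = pos_root_coeff n i j k l"
proof (cases "k = j \<and> l = i")
  case True
  then show ?thesis using mirror_diag_nonzero[OF assms(1)] mirror_diag_nonzero[OF assms(2)] by (auto simp: field_simps)
next
  case not_transposed: False
  show ?thesis
  proof (cases "k = 2*n-1-i \<and> l = 2*n-1-j")
    case True
    then have "d k = inverse (d i)" "d l = inverse (d j)"
      using assms mirror_diag_inverse by auto
    then show ?thesis using mirror_diag_nonzero[OF assms(1)] mirror_diag_nonzero[OF assms(2)] by (simp add: field_simps)
  next
    case False
    then have "pos_root_coeff n i j k l = (0::'a)"
      using not_transposed unfolding pos_root_coeff_def by (simp only: if_False diff_zero if_cancel)
    then show ?thesis by simp
  qed
qed

text \<open>\<open>e\<^sub>\<alpha>\<^sub>n\<^sub>-\<^sub>1\<close> and \<open>e\<^sub>-\<^sub>\<alpha>\<^sub>n\<close> have inverse weights because \<open>\<alpha>\<^sub>n\<^sub>-\<^sub>1 - \<alpha>\<^sub>n = -2\<epsilon>\<^sub>n\<close>,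
  on which the torus acts by \<open>\<eta>\<^sup>-\<^sup>2 = 1\<close>.\<close>
lemma wedge_coeff_scaling:
  defines "\<kappa> \<equiv> d (n-2) * \<eta>"
  shows "d i * inverse (d j) * e_alpha_nm1 n i j = \<kappa> * e_alpha_nm1 n i j"
    and "d i * inverse (d j) * e_neg_alpha_n n i j = inverse \<kappa> * e_neg_alpha_n n i j"
proof -
  have "d (n+1) = inverse (d (n-2))"
    using mirror_diag_inverse[of "n-2"] n3 by (simp add: Suc_diff_Suc numeral_2_eq_2)
  moreover have "inverse \<eta> = \<eta>" using eta_square by (metis inverse_unique)
  ultimately show "d i * inverse (d j) * e_alpha_nm1 n i j = \<kappa> * e_alpha_nm1 n i j"
    and "d i * inverse (d j) * e_neg_alpha_n n i j = inverse \<kappa> * e_neg_alpha_n n i j"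
    using n3 d_middle by (auto simp: e_alpha_nm1_def e_neg_alpha_n_def \<kappa>_def mult.commute)
qed

lemma r_BD_scaling:
  assumes "i < 2*n" "j < 2*n" "k < 2*n" "l < 2*n"
  shows "d i * inverse (d j) * d k * inverse (d l) * r_BD n c i j k l = r_BD n c i j k l"
proof -
  let ?w = "d i * inverse (d j) * d k * inverse (d l)"
  have rzero: "?w * rzero n c i j k l = rzero n c i j k l"
    using assms mirror_diag_nonzero by (cases "i = j \<and> k = l") (auto simp: rzero_off_diagonal)
  have wedge: "?w * (e_alpha_nm1 n i j * e_neg_alpha_n n k l - e_neg_alpha_n n i j * e_alpha_nm1 n k l)
      = e_alpha_nm1 n i j * e_neg_alpha_n n k l - e_neg_alpha_n n i j * e_alpha_nm1 n k l"
  proof -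
    define \<kappa> where "\<kappa> = d (n-2) * \<eta>"
    have "\<eta> \<noteq> 0" using eta_square by auto
    moreover have "n-2 < 2*n" using n3 by simp
    then have "d (n-2) \<noteq> 0" by (rule mirror_diag_nonzero)
    ultimately have "\<kappa> \<noteq> 0" by (simp add: \<kappa>_def)
    have "?w * (e_alpha_nm1 n i j * e_neg_alpha_n n k l - e_neg_alpha_n n i j * e_alpha_nm1 n k l)
        = (d i * inverse (d j) * e_alpha_nm1 n i j) * (d k * inverse (d l) * e_neg_alpha_n n k l)
          - (d i * inverse (d j) * e_neg_alpha_n n i j) * (d k * inverse (d l) * e_alpha_nm1 n k l)"
      by (simp add: algebra_simps)
    also have "\<dots> = (\<kappa> * inverse \<kappa>) * (e_alpha_nm1 n i j * e_neg_alpha_n n k l)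
          - (\<kappa> * inverse \<kappa>) * (e_neg_alpha_n n i j * e_alpha_nm1 n k l)"
      unfolding wedge_coeff_scaling \<kappa>_def by (simp only: ac_simps)
    finally show ?thesis using \<open>\<kappa> \<noteq> 0\<close> by simp
  qed
  have "n \<ge> 2" using n3 by simp
  note coeff = r_BD_coeff[OF this assms, of c]
  show ?thesis
    unfolding coeff distrib_left rzero pos_root_coeff_scaling[OF assms] wedge ..
qed

end

lemma Tdiag_in_centr:
  fixes c :: "nat \<Rightarrow> nat \<Rightarrow> 'a::field"
  assumes n3: "n \<ge> 3" and t: "\<forall>i<n-1. t i \<noteq> 0" and eta: "\<eta> = 1 \<or> \<eta> = -1"
  shows "Tdiag n t \<eta> \<in> centr n (r_BD n c)"
proof -
  define d where "d i = (if i < n-1 then t i else if i = n-1 \<or> i = n then \<eta> else inverse (t (mir n i)))" for i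
  have T: "Tdiag n t \<eta> = mat_diag (2*n) d"
    by (rule eq_matI) (auto simp: Tdiag_def mat_diag_def d_def)
  have d_mirror: "\<forall>i<2*n. d (2*n-1-i) * d i = 1"
  proof (intro allI impI)
    fix i assume i: "i < 2*n"
    consider "i < n-1" | "i = n-1 \<or> i = n" | "n < i" by linarith
    then show "d (2*n-1-i) * d i = 1"
      using i t eta n3 by cases (auto simp: d_def mir_def)
  qed
  have d_middle: "d (n-1) = \<eta>" "d n = \<eta>" and eta_square: "\<eta> * \<eta> = 1"
    using eta by (auto simp: d_def)
  have d_nonzero: "\<forall>i<2*n. d i \<noteq> 0"
    using mirror_diag_nonzero[OF n3 d_mirror d_middle eta_square] by blast
  have "AdAd (2*n) (mat_diag (2*n) d) (r_BD n c) i j k l = r_BD n c i j k l" for i j k l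
  proof (cases "i < 2*n \<and> j < 2*n \<and> k < 2*n \<and> l < 2*n")
    case True
    then show ?thesis
      using AdAd_mat_diag[OF d_nonzero] r_BD_scaling[OF n3 d_mirror d_middle eta_square] by simp
  next
    case False
    then show ?thesis by (simp only: AdAd_outside[OF False] r_BD_outside[OF False])
  qed
  then have "AdAd (2*n) (mat_diag (2*n) d) (r_BD n c) = r_BD n c" by (intro ext)
  then show ?thesis
    using mat_diag_in_orth_grp[OF d_mirror] T by (simp add: centr_def)
qed

theorem mainTheorem11:
  fixes n :: nat and c :: "nat \<Rightarrow> nat \<Rightarrow> Kbar"
  assumes "n \<ge> 3"
    and "admissible_r0 n c"
  shows "centr n (r_BD n c) =
    {Tdiag n t \<eta> | t \<eta>. (\<forall>i < n - 1. t i \<noteq> 0) \<and> (\<eta> = 1 \<or> \<eta> = -1)}"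
  using centr_subset_Tdiag[OF assms] Tdiag_in_centr[OF assms(1)] by blast

end
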